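(* In the setting where $K$ is the Erdős–Rényi random graph on ${\cal V}=\{1,\ldots,n\}$ ($n\ge2$) with edge probability $p\in(0,1)$, $Y$ its number of isolated vertices, $V$ uniform on ${\cal V}$ independent of $K$, $K^s$ obtained from $K$ by deleting all edges incident to $V$, and $Y^s$ the number of isolated vertices of $K^s$, for every $\theta\ge 0$, $$E\big(e^{\theta Y^s}-e^{\theta Y}\big)\le \frac{\theta\gamma_\theta}{2}\,E\big(e^{\theta Y}\big),\qquad \gamma_\theta=e^\theta(pe^\theta+1-p)^{n-2}(npe^\theta+1-p)+(n-1)p+1,$$ and consequently $\frac{d}{d\theta}E(e^{\theta Y})\le \mu\big(1+\tfrac{\theta\gamma_\theta}{2}\big)E(e^{\theta Y})$ for $\theta\ge0$, where $\mu=EY$. Moreover, for every $\theta<0$, $E(e^{\theta Y}-e^{\theta Y^s})\le 2|\theta|E(e^{\theta Y})$ and $\frac{d}{d\theta}E(e^{\theta Y})\ge \mu(1+2\theta)E(e^{\theta Y})$.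
   Context: The Erdős–Rényi random graph on ${\cal V}$ with edge probability $p$ has independent Bernoulli($p$) edge indicators for all unordered pairs of distinct vertices; an isolated vertex is one of degree $0$. *)

theory Defs
  imports "HOL-Analysis.Analysis"
begin

definition vpairs :: "nat \<Rightarrow> nat set set" where
  "vpairs n = {{i, j} | i j. i \<in> {1..n} \<and> j \<in> {1..n} \<and> i \<noteq> j}"

definition graphs :: "nat \<Rightarrow> nat set set set" where
  "graphs n = Pow (vpairs n)"

text \<open>Erdos-Renyi probability of the edge set G: independent Bernoulli(p) indicators.\<close>
definition er_prob :: "nat \<Rightarrow> real \<Rightarrow> nat set set \<Rightarrow> real" where
  "er_prob n p G = p ^ card G * (1 - p) ^ (card (vpairs n) - card G)"

definition num_isolated :: "nat \<Rightarrow> nat set set \<Rightarrow> nat" where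
  "num_isolated n G = card {v \<in> {1..n}. \<forall>e\<in>G. v \<notin> e}"

definition delete_incident :: "nat set set \<Rightarrow> nat \<Rightarrow> nat set set" where
  "delete_incident G v = {e \<in> G. v \<notin> e}"

definition mgf_Y :: "nat \<Rightarrow> real \<Rightarrow> real \<Rightarrow> real" where
  "mgf_Y n p \<theta> = (\<Sum>G\<in>graphs n. er_prob n p G * exp (\<theta> * real (num_isolated n G)))"

text \<open>E(e^{\<theta> Y^s}), with V uniform on {1..n} independent of K.\<close>
definition mgf_Ys :: "nat \<Rightarrow> real \<Rightarrow> real \<Rightarrow> real" where
  "mgf_Ys n p \<theta> = (\<Sum>G\<in>graphs n. \<Sum>v\<in>{1..n}.
      er_prob n p G * (1 / real n) * exp (\<theta> * real (num_isolated n (delete_incident G v))))"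

definition mean_Y :: "nat \<Rightarrow> real \<Rightarrow> real" where
  "mean_Y n p = (\<Sum>G\<in>graphs n. er_prob n p G * real (num_isolated n G))"

definition gamma_theta :: "nat \<Rightarrow> real \<Rightarrow> real \<Rightarrow> real" where
  "gamma_theta n p \<theta> = exp \<theta> * (p * exp \<theta> + 1 - p) ^ (n - 2) * (real n * p * exp \<theta> + 1 - p)
     + (real n - 1) * p + 1"

end

theory Submission
  imports Defs
begin

(* Write Y = Y(G) for the number of isolated vertices of the Erdos-Renyi graph G and
   G^v for G with all edges at v deleted, so that E e^{tY^s} = (1/n) sum_v E e^{t Y(G^v)}.
   1. Product Bernoulli weights on the subsets of a finite set: splitting the ground set
      into two disjoint parts, summing out one element, and the generating function and
      mean of the number of chosen elements inside a fixed set.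
   2. Combinatorics of isolated vertices: Y(G) <= Y(G^v) <= Y(G) + 1 + L_v(G), where L_v(G)
      counts the neighbours of v whose only edge goes to v; L_v(G) <= deg_v(G) and
      sum_v L_v(G) <= n.
   3. Splitting the edge set into pairs avoiding v and pairs containing v gives the
      size-bias identity E[Y f(G)] = (1-p)^(n-1) sum_v E f(G^v), hence
      mu = n (1-p)^(n-1) and d/dt E e^{tY} = mu E e^{tY^s}.
   4. For t >= 0 the trapezoid bound e^b - e^a <= (b-a)(e^a+e^b)/2 reduces
      E(e^{tY^s} - e^{tY}) to two terms, bounded with the edge monotonicity of e^{tY} and
      a conditional computation given the edges avoiding v; for t < 0 the bound
      e^a - e^b <= (a-b) e^a and sum_v (Y(G^v) - Y(G)) <= 2n suffice. *)

section \<open>Product Bernoulli weights on subsets of a finite set\<close>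

definition bern_wt :: "real \<Rightarrow> 'a set \<Rightarrow> 'a set \<Rightarrow> real" where
  "bern_wt p X G = p ^ card G * (1 - p) ^ (card X - card G)"

lemma bern_wt_nonneg: "0 \<le> p \<Longrightarrow> p \<le> 1 \<Longrightarrow> 0 \<le> bern_wt p X G"
  by (simp add: bern_wt_def)

lemma bern_wt_union:
  assumes "finite A" "finite B" "A \<inter> B = {}" "H \<subseteq> A" "S \<subseteq> B"
  shows "bern_wt p A H * bern_wt p B S = bern_wt p (A \<union> B) (H \<union> S)"
proof -
  have "finite H" "finite S" using assms by (auto intro: finite_subset)
  then have cHS: "card (H \<union> S) = card H + card S"
    using assms by (intro card_Un_disjoint) auto
  have cAB: "card (A \<union> B) = card A + card B" using assms by (intro card_Un_disjoint) auto
  have "card H \<le> card A" "card S \<le> card B" using assms by (auto intro: card_mono)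
  then have "card A + card B - (card H + card S) = (card A - card H) + (card B - card S)"
    by simp
  then show ?thesis unfolding bern_wt_def cHS cAB by (simp add: power_add algebra_simps)
qed

lemma sum_Pow_split:
  assumes "finite A" "finite B" "A \<inter> B = {}"
  shows "(\<Sum>G\<in>Pow (A \<union> B). bern_wt p (A \<union> B) G * f G)
       = (\<Sum>H\<in>Pow A. \<Sum>S\<in>Pow B. bern_wt p A H * bern_wt p B S * f (H \<union> S))"
proof -
  have bij: "bij_betw (\<lambda>(H, S). H \<union> S) (Pow A \<times> Pow B) (Pow (A \<union> B))"
  proof (rule bij_betw_byWitness[where f' = "\<lambda>G. (G \<inter> A, G \<inter> B)"])
    show "\<forall>x\<in>Pow A \<times> Pow B. (\<lambda>G. (G \<inter> A, G \<inter> B)) ((\<lambda>(H, S). H \<union> S) x) = x"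
      using assms(3) by auto
  qed auto
  have "(\<Sum>H\<in>Pow A. \<Sum>S\<in>Pow B. bern_wt p A H * bern_wt p B S * f (H \<union> S))
      = (\<Sum>(H, S)\<in>Pow A \<times> Pow B. bern_wt p (A \<union> B) (H \<union> S) * f (H \<union> S))"
    unfolding sum.cartesian_product by (intro sum.cong refl) (auto simp: bern_wt_union assms)
  also have "\<dots> = (\<Sum>G\<in>Pow (A \<union> B). bern_wt p (A \<union> B) G * f G)"
    using sum.reindex_bij_betw[OF bij, of "\<lambda>G. bern_wt p (A \<union> B) G * f G"]
    by (simp add: case_prod_unfold)
  finally show ?thesis by simp
qed

lemma sum_Pow_pivot:
  assumes "finite X" "e \<in> X"
  shows "(\<Sum>G\<in>Pow X. bern_wt p X G * f G)
       = (\<Sum>H\<in>Pow (X - {e}). bern_wt p (X - {e}) H * ((1 - p) * f H + p * f (insert e H)))"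
proof -
  have X: "X = (X - {e}) \<union> {e}" using assms by auto
  have Pow_e: "Pow {e} = {{e}, {}}" by auto
  have "(\<Sum>G\<in>Pow X. bern_wt p X G * f G)
      = (\<Sum>H\<in>Pow (X - {e}). \<Sum>S\<in>Pow {e}. bern_wt p (X - {e}) H * bern_wt p {e} S * f (H \<union> S))"
    using assms sum_Pow_split[of "X - {e}" "{e}" p f] X by simp
  also have "\<dots> = (\<Sum>H\<in>Pow (X - {e}). bern_wt p (X - {e}) H * ((1 - p) * f H + p * f (insert e H)))"
    unfolding Pow_e by (intro sum.cong refl) (simp add: bern_wt_def algebra_simps)
  finally show ?thesis .
qed

lemma sum_Pow_power_card_inter:
  assumes "finite B"
  shows "(\<Sum>S\<in>Pow B. bern_wt p B S * x ^ card (S \<inter> M)) = (p * x + 1 - p) ^ card (B \<inter> M)"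
  using assms
proof (induction B rule: finite_induct)
  case empty then show ?case by (simp add: bern_wt_def)
next
  case (insert b B)
  have "(\<Sum>S\<in>Pow (insert b B). bern_wt p (insert b B) S * x ^ card (S \<inter> M))
     = (\<Sum>H\<in>Pow B. bern_wt p B H * ((1 - p) * x ^ card (H \<inter> M) + p * x ^ card (insert b H \<inter> M)))"
    using sum_Pow_pivot[of "insert b B" b p "\<lambda>S. x ^ card (S \<inter> M)"] insert by simp
  also have "\<dots> = (\<Sum>H\<in>Pow B. bern_wt p B H * x ^ card (H \<inter> M)) * (if b \<in> M then p * x + 1 - p else 1)"
    unfolding sum_distrib_right
  proof (intro sum.cong refl)
    fix H assume H: "H \<in> Pow B"
    then have "b \<notin> H" "finite (H \<inter> M)" using insert by (auto intro: finite_subset)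
    then show "bern_wt p B H * ((1 - p) * x ^ card (H \<inter> M) + p * x ^ card (insert b H \<inter> M)) =
         bern_wt p B H * x ^ card (H \<inter> M) * (if b \<in> M then p * x + 1 - p else 1)"
      by (auto simp: algebra_simps)
  qed
  also have "\<dots> = (p * x + 1 - p) ^ card (insert b B \<inter> M)"
    using insert by (auto simp: insert.IH)
  finally show ?case .
qed

lemma sum_Pow_total: "finite B \<Longrightarrow> (\<Sum>S\<in>Pow B. bern_wt p B S) = 1"
  using sum_Pow_power_card_inter[of B p 1 "{}"] by simp

lemma sum_Pow_card_inter:
  assumes "finite B"
  shows "(\<Sum>S\<in>Pow B. bern_wt p B S * real (card (S \<inter> M))) = p * card (B \<inter> M)"
  using assms
proof (induction B rule: finite_induct)
  case empty then show ?case by (simp add: bern_wt_def)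
next
  case (insert b B)
  have "(\<Sum>S\<in>Pow (insert b B). bern_wt p (insert b B) S * real (card (S \<inter> M)))
     = (\<Sum>H\<in>Pow B. bern_wt p B H * ((1 - p) * real (card (H \<inter> M)) + p * real (card (insert b H \<inter> M))))"
    using sum_Pow_pivot[of "insert b B" b p "\<lambda>S. real (card (S \<inter> M))"] insert by simp
  also have "\<dots> = (\<Sum>H\<in>Pow B. bern_wt p B H * real (card (H \<inter> M)) + bern_wt p B H * (if b \<in> M then p else 0))"
  proof (intro sum.cong refl)
    fix H assume H: "H \<in> Pow B"
    then have "b \<notin> H" "finite (H \<inter> M)" using insert by (auto intro: finite_subset)
    then show "bern_wt p B H * ((1 - p) * real (card (H \<inter> M)) + p * real (card (insert b H \<inter> M))) =
         bern_wt p B H * real (card (H \<inter> M)) + bern_wt p B H * (if b \<in> M then p else 0)"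
      by (auto simp: algebra_simps)
  qed
  also have "\<dots> = p * card (B \<inter> M) + (\<Sum>H\<in>Pow B. bern_wt p B H) * (if b \<in> M then p else 0)"
    by (simp add: sum.distrib sum_distrib_right insert.IH)
  also have "\<dots> = p * card (insert b B \<inter> M)"
    using insert by (auto simp: sum_Pow_total algebra_simps)
  finally show ?case .
qed

lemma sum_Pow_edge_antimono:
  assumes "finite X" "e \<in> X" "0 \<le> p" "p \<le> 1"
    and antimono: "\<And>H. H \<subseteq> X - {e} \<Longrightarrow> f (insert e H) \<le> f H"
  shows "(\<Sum>G\<in>Pow X. bern_wt p X G * (if e \<in> G then f G else 0)) \<le> p * (\<Sum>G\<in>Pow X. bern_wt p X G * f G)"
proof -
  let ?w = "bern_wt p (X - {e})"
  have "(\<Sum>G\<in>Pow X. bern_wt p X G * (if e \<in> G then f G else 0))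
      = p * (\<Sum>H\<in>Pow (X - {e}). ?w H * f (insert e H))"
    unfolding sum_Pow_pivot[OF assms(1,2)] sum_distrib_left by (intro sum.cong refl) auto
  also have "\<dots> \<le> p * (\<Sum>H\<in>Pow (X - {e}). ?w H * ((1 - p) * f H + p * f (insert e H)))"
  proof (rule mult_left_mono[OF sum_mono])
    fix H assume H: "H \<in> Pow (X - {e})"
    have "0 \<le> (1 - p) * (f H - f (insert e H))"
      using antimono[of H] H assms(3,4) by (intro mult_nonneg_nonneg) auto
    then show "?w H * f (insert e H) \<le> ?w H * ((1 - p) * f H + p * f (insert e H))"
      by (intro mult_left_mono bern_wt_nonneg assms) (simp add: algebra_simps)
  qed (rule assms(3))
  also have "\<dots> = p * (\<Sum>G\<in>Pow X. bern_wt p X G * f G)"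
    using sum_Pow_pivot[OF assms(1,2), of p f] by simp
  finally show ?thesis .
qed

section \<open>Isolated vertices and vertex deletion\<close>

definition iso_set :: "nat \<Rightarrow> nat set set \<Rightarrow> nat set" where
  "iso_set n G = {u \<in> {1..n}. \<forall>e\<in>G. u \<notin> e}"

text \<open>Neighbours u of v whose only edge is uv: exactly the vertices other than v
  that become isolated when the edges at v are deleted.\<close>
definition leaf_nbrs :: "nat \<Rightarrow> nat set set \<Rightarrow> nat \<Rightarrow> nat set" where
  "leaf_nbrs n G v = {u \<in> {1..n}. u \<noteq> v \<and> {v, u} \<in> G \<and> (\<forall>e\<in>G. u \<in> e \<longrightarrow> e = {v, u})}"

lemma num_isolated_card: "num_isolated n G = card (iso_set n G)"
  by (simp add: num_isolated_def iso_set_def)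

lemma iso_set_sub: "iso_set n G \<subseteq> {1..n}" by (auto simp: iso_set_def)

lemma iso_set_finite: "finite (iso_set n G)" using iso_set_sub finite_subset by blast

lemma iso_set_antimono: "G \<subseteq> G' \<Longrightarrow> iso_set n G' \<subseteq> iso_set n G"
  by (auto simp: iso_set_def)

lemma num_isolated_antimono: "G \<subseteq> G' \<Longrightarrow> num_isolated n G' \<le> num_isolated n G"
  unfolding num_isolated_card by (intro card_mono iso_set_finite iso_set_antimono)

lemma vpairs_finite: "finite (vpairs n)"
  by (rule finite_subset[of _ "Pow {1..n}"]) (auto simp: vpairs_def)

lemma vpairs_pair:
  assumes "e \<in> vpairs n" "v \<in> e" "u \<in> e" "u \<noteq> v" shows "e = {v, u}"
  using assms unfolding vpairs_def by auto

lemma pair_in_vpairs: "v \<in> {1..n} \<Longrightarrow> u \<in> {1..n} \<Longrightarrow> u \<noteq> v \<Longrightarrow> {v, u} \<in> vpairs n"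
  unfolding vpairs_def by blast

lemma iso_set_delete_incident:
  assumes "G \<subseteq> vpairs n"
  shows "iso_set n G \<subseteq> iso_set n (delete_incident G v)"
    and "iso_set n (delete_incident G v) \<subseteq> iso_set n G \<union> {v} \<union> leaf_nbrs n G v"
proof -
  show "iso_set n G \<subseteq> iso_set n (delete_incident G v)"
    by (intro iso_set_antimono) (auto simp: delete_incident_def)
  show "iso_set n (delete_incident G v) \<subseteq> iso_set n G \<union> {v} \<union> leaf_nbrs n G v"
  proof
    fix u assume u: "u \<in> iso_set n (delete_incident G v)"
    show "u \<in> iso_set n G \<union> {v} \<union> leaf_nbrs n G v"
    proof (cases "u \<in> iso_set n G \<or> u = v")
      case False
      then have uv: "u \<noteq> v" and u1: "u \<in> {1..n}" using u by (auto simp: iso_set_def)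
      from False u1 obtain e where e: "e \<in> G" "u \<in> e" unfolding iso_set_def by blast
      have only: "e' = {v, u}" if "e' \<in> G" "u \<in> e'" for e'
      proof -
        have "v \<in> e'" using u that unfolding iso_set_def delete_incident_def by blast
        then show ?thesis using that uv assms vpairs_pair by blast
      qed
      then have "{v, u} \<in> G" using e by metis
      then show ?thesis unfolding leaf_nbrs_def using only uv u1 by blast
    qed auto
  qed
qed

lemma num_isolated_delete_ge: "G \<subseteq> vpairs n \<Longrightarrow> num_isolated n G \<le> num_isolated n (delete_incident G v)"
  unfolding num_isolated_card by (intro card_mono iso_set_finite iso_set_delete_incident)

lemma num_isolated_delete_le:
  assumes "G \<subseteq> vpairs n"
  shows "num_isolated n (delete_incident G v) \<le> num_isolated n G + 1 + card (leaf_nbrs n G v)"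
proof -
  have "finite (leaf_nbrs n G v)" by (auto simp: leaf_nbrs_def)
  then have "card (iso_set n (delete_incident G v)) \<le> card (iso_set n G \<union> {v} \<union> leaf_nbrs n G v)"
    by (intro card_mono iso_set_delete_incident assms) (auto simp: iso_set_finite)
  also have "\<dots> \<le> card (iso_set n G \<union> {v}) + card (leaf_nbrs n G v)" by (rule card_Un_le)
  also have "\<dots> \<le> card (iso_set n G) + 1 + card (leaf_nbrs n G v)"
    using card_Un_le[of "iso_set n G" "{v}"] by simp
  finally show ?thesis unfolding num_isolated_card .
qed

lemma leaf_nbrs_inj: "inj_on (\<lambda>u. {v, u}) (leaf_nbrs n G v)"
  by (auto simp: inj_on_def doubleton_eq_iff)

lemma card_leaf_nbrs_le_degree:
  assumes "finite G"
  shows "card (leaf_nbrs n G v) \<le> card {e \<in> G. v \<in> e}"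
  using assms by (intro card_inj_on_le[OF leaf_nbrs_inj]) (auto simp: leaf_nbrs_def)

text \<open>A vertex is a leaf neighbour of at most one vertex, so all leaf neighbourhoods
  together have at most n elements.\<close>
lemma sum_card_leaf_nbrs_le: "(\<Sum>v\<in>{1..n}. card (leaf_nbrs n G v)) \<le> n"
proof -
  have "(\<Sum>v\<in>{1..n}. card (leaf_nbrs n G v)) = card (SIGMA v:{1..n}. leaf_nbrs n G v)"
    by (rule card_SigmaI[symmetric]) (auto simp: leaf_nbrs_def)
  also have "\<dots> \<le> card {1..n}"
  proof (rule card_inj_on_le[of snd])
    show "inj_on snd (SIGMA v:{1..n}. leaf_nbrs n G v)"
    proof (rule inj_onI, clarsimp)
      fix v u v' assume "u \<in> leaf_nbrs n G v" "u \<in> leaf_nbrs n G v'"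
      then have "{v', u} = {v, u}" "u \<noteq> v" "u \<noteq> v'" unfolding leaf_nbrs_def by blast+
      then show "v = v'" by (auto simp: doubleton_eq_iff)
    qed
  qed (auto simp: leaf_nbrs_def)
  finally show ?thesis by simp
qed

lemma sum_isolated_gain_le:
  assumes "G \<subseteq> vpairs n"
  shows "(\<Sum>v\<in>{1..n}. real (num_isolated n (delete_incident G v)) - real (num_isolated n G)) \<le> 2 * real n"
proof -
  have "(\<Sum>v\<in>{1..n}. real (num_isolated n (delete_incident G v)) - real (num_isolated n G))
      \<le> (\<Sum>v\<in>{1..n}. 1 + real (card (leaf_nbrs n G v)))"
  proof (rule sum_mono)
    fix v
    show "real (num_isolated n (delete_incident G v)) - real (num_isolated n G) \<le> 1 + real (card (leaf_nbrs n G v))"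
      using of_nat_mono[OF num_isolated_delete_le[OF assms, of v], where 'a = real] by simp
  qed
  also have "\<dots> = real n + real (\<Sum>v\<in>{1..n}. card (leaf_nbrs n G v))" by (simp add: sum.distrib)
  also have "\<dots> \<le> 2 * real n" using of_nat_mono[OF sum_card_leaf_nbrs_le[of n G], where 'a = real] by simp
  finally show ?thesis .
qed

section \<open>The Erdos-Renyi model split at a vertex\<close>

lemma er_prob_bern_wt: "er_prob n p G = bern_wt p (vpairs n) G"
  by (simp add: er_prob_def bern_wt_def)

lemma er_prob_nonneg: "0 \<le> p \<Longrightarrow> p \<le> 1 \<Longrightarrow> 0 \<le> er_prob n p G"
  by (simp add: er_prob_def)

lemma er_prob_total: "(\<Sum>G\<in>graphs n. er_prob n p G) = 1"
  unfolding graphs_def er_prob_bern_wt by (rule sum_Pow_total[OF vpairs_finite])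

definition far_pairs :: "nat \<Rightarrow> nat \<Rightarrow> nat set set" where
  "far_pairs n v = {e \<in> vpairs n. v \<notin> e}"

definition star_pairs :: "nat \<Rightarrow> nat \<Rightarrow> nat set set" where
  "star_pairs n v = {e \<in> vpairs n. v \<in> e}"

lemma far_pairs_finite: "finite (far_pairs n v)"
  using vpairs_finite by (auto simp: far_pairs_def)

lemma star_pairs_finite: "finite (star_pairs n v)"
  using vpairs_finite by (auto simp: star_pairs_def)

lemma star_pairs_eq: "v \<in> {1..n} \<Longrightarrow> star_pairs n v = (\<lambda>u. {v, u}) ` ({1..n} - {v})"
  unfolding star_pairs_def vpairs_def by (auto; blast)

lemma card_star_pairs: "v \<in> {1..n} \<Longrightarrow> card (star_pairs n v) = n - 1"
  unfolding star_pairs_eq by (subst card_image) (auto simp: inj_on_def doubleton_eq_iff)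

lemma er_sum_split:
  "(\<Sum>G\<in>graphs n. er_prob n p G * f G)
     = (\<Sum>H\<in>Pow (far_pairs n v). bern_wt p (far_pairs n v) H *
          (\<Sum>S\<in>Pow (star_pairs n v). bern_wt p (star_pairs n v) S * f (H \<union> S)))"
proof -
  have "vpairs n = far_pairs n v \<union> star_pairs n v" "far_pairs n v \<inter> star_pairs n v = {}"
    by (auto simp: far_pairs_def star_pairs_def)
  then show ?thesis
    unfolding graphs_def er_prob_bern_wt
    by (simp add: sum_Pow_split[OF far_pairs_finite star_pairs_finite] sum_distrib_left mult.assoc)
qed

lemma delete_incident_split:
  "H \<subseteq> far_pairs n v \<Longrightarrow> S \<subseteq> star_pairs n v \<Longrightarrow> delete_incident (H \<union> S) v = H"
  by (auto simp: delete_incident_def far_pairs_def star_pairs_def)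

lemma split_subset_vpairs:
  "H \<subseteq> far_pairs n v \<Longrightarrow> S \<subseteq> star_pairs n v \<Longrightarrow> H \<union> S \<subseteq> vpairs n"
  by (auto simp: far_pairs_def star_pairs_def)

text \<open>Size-bias identity for a single vertex: v is isolated iff its star is empty,
  which happens with probability (1-p)^(n-1) independently of the far part G^v.\<close>
lemma size_bias_vertex:
  assumes v: "v \<in> {1..n}"
  shows "(\<Sum>G\<in>graphs n. er_prob n p G * (if v \<in> iso_set n G then f G else 0))
       = (1 - p) ^ (n - 1) * (\<Sum>G\<in>graphs n. er_prob n p G * f (delete_incident G v))"
proof -
  let ?A = "far_pairs n v" and ?B = "star_pairs n v"
  have iso: "v \<in> iso_set n (H \<union> S) \<longleftrightarrow> S = {}" if "H \<subseteq> ?A" "S \<subseteq> ?B" for H S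
    using that v unfolding iso_set_def far_pairs_def star_pairs_def by blast
  have "(\<Sum>G\<in>graphs n. er_prob n p G * (if v \<in> iso_set n G then f G else 0))
      = (\<Sum>H\<in>Pow ?A. bern_wt p ?A H * (\<Sum>S\<in>Pow ?B. if S = {} then bern_wt p ?B S * f H else 0))"
    unfolding er_sum_split[of n p _ v] by (intro sum.cong refl arg_cong2[where f = "(*)"]) (auto simp: iso)
  also have "\<dots> = (1 - p) ^ (n - 1) * (\<Sum>H\<in>Pow ?A. bern_wt p ?A H * f H)"
    by (simp add: sum_distrib_left bern_wt_def card_star_pairs[OF v] star_pairs_finite algebra_simps)
  also have "\<dots> = (1 - p) ^ (n - 1) * (\<Sum>G\<in>graphs n. er_prob n p G * f (delete_incident G v))"
    unfolding er_sum_split[of n p _ v]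
    by (simp add: delete_incident_split sum_distrib_right[symmetric] sum_Pow_total star_pairs_finite
        flip: sum_distrib_left)
  finally show ?thesis .
qed

lemma size_bias:
  "(\<Sum>G\<in>graphs n. er_prob n p G * (real (num_isolated n G) * f G))
     = (1 - p) ^ (n - 1) * (\<Sum>v\<in>{1..n}. \<Sum>G\<in>graphs n. er_prob n p G * f (delete_incident G v))"
proof -
  have count: "real (num_isolated n G) * c = (\<Sum>v\<in>{1..n}. if v \<in> iso_set n G then c else 0)"
    for G and c :: real
    using iso_set_sub[of n G] by (simp add: sum.If_cases Int_absorb1 num_isolated_card)
  have "(\<Sum>G\<in>graphs n. er_prob n p G * (real (num_isolated n G) * f G))
     = (\<Sum>v\<in>{1..n}. \<Sum>G\<in>graphs n. er_prob n p G * (if v \<in> iso_set n G then f G else 0))"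
    unfolding count sum_distrib_left by (rule sum.swap)
  also have "\<dots> = (1 - p) ^ (n - 1) * (\<Sum>v\<in>{1..n}. \<Sum>G\<in>graphs n. er_prob n p G * f (delete_incident G v))"
    by (simp add: size_bias_vertex sum_distrib_left)
  finally show ?thesis .
qed

lemma mgf_Ys_eq:
  "mgf_Ys n p t = (1 / real n) * (\<Sum>v\<in>{1..n}. \<Sum>G\<in>graphs n. er_prob n p G *
      exp (t * real (num_isolated n (delete_incident G v))))"
  unfolding mgf_Ys_def sum_distrib_left by (subst sum.swap) (simp add: algebra_simps)

lemma mean_Y_eq: "mean_Y n p = real n * (1 - p) ^ (n - 1)"
  using size_bias[of n p "\<lambda>_. 1"] by (simp add: mean_Y_def er_prob_total)

text \<open>Differentiating under the finite sum and applying the size-bias identity.\<close>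
lemma deriv_mgf_Y: "deriv (mgf_Y n p) t = mean_Y n p * mgf_Ys n p t"
proof -
  have "DERIV (mgf_Y n p) t :> (\<Sum>G\<in>graphs n. er_prob n p G * (real (num_isolated n G) * exp (t * real (num_isolated n G))))"
    unfolding mgf_Y_def[abs_def] by (rule DERIV_sum) (auto intro!: derivative_eq_intros)
  then show ?thesis
    unfolding size_bias mean_Y_eq mgf_Ys_eq
    by (cases "n = 0") (simp_all add: DERIV_imp_deriv)
qed

lemma mgf_Ys_minus_mgf_Y:
  assumes "n \<ge> 1"
  shows "mgf_Ys n p t - mgf_Y n p t = (1 / real n) * (\<Sum>v\<in>{1..n}. \<Sum>G\<in>graphs n. er_prob n p G *
      (exp (t * real (num_isolated n (delete_incident G v))) - exp (t * real (num_isolated n G))))"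
proof -
  have "mgf_Y n p t = (1 / real n) * (\<Sum>v\<in>{1..n}. \<Sum>G\<in>graphs n. er_prob n p G * exp (t * real (num_isolated n G)))"
    using assms by (simp add: mgf_Y_def)
  then show ?thesis by (simp add: mgf_Ys_eq right_diff_distrib sum_subtractf)
qed

section \<open>Two elementary real inequalities\<close>

lemma exp_trapezoid:
  fixes a b :: real assumes "a \<le> b"
  shows "exp b - exp a \<le> (b - a) * (exp a + exp b) / 2"
proof -
  let ?g = "\<lambda>x::real. x * (1 + exp x) / 2 - exp x + 1"
  have "?g 0 \<le> ?g (b - a)"
  proof (rule DERIV_nonneg_imp_nondecreasing[of 0 "b - a" ?g])
    show "0 \<le> b - a" using assms by simp
  next
    fix x :: real assume "0 \<le> x" "x \<le> b - a"
    have D: "DERIV ?g x :> ((1 + exp x) / 2 + x * exp x / 2 - exp x)"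
      by (rule derivative_eq_intros refl | simp)+
    have "(1 - x) * exp x \<le> exp (- x) * exp x"
      using exp_ge_add_one_self[of "- x"] by (intro mult_right_mono) auto
    then have "0 \<le> (1 + exp x) / 2 + x * exp x / 2 - exp x" by (simp add: exp_minus field_simps)
    with D show "\<exists>y. DERIV ?g x :> y \<and> 0 \<le> y" by blast
  qed
  then have "exp (b - a) - 1 \<le> (b - a) * (1 + exp (b - a)) / 2" by simp
  from mult_left_mono[OF this, of "exp a"]
  have "exp a * (exp (b - a) - 1) \<le> exp a * ((b - a) * (1 + exp (b - a)) / 2)" by simp
  moreover have "exp a * exp (b - a) = exp b" by (simp add: exp_diff)
  ultimately show ?thesis by (simp add: algebra_simps)
qed

lemma exp_diff_le_tangent:
  fixes a b :: real shows "exp a - exp b \<le> (a - b) * exp a"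
proof -
  have "exp a * (1 + (b - a)) \<le> exp a * exp (b - a)"
    using exp_ge_add_one_self by (intro mult_left_mono) auto
  then show ?thesis by (simp add: exp_diff algebra_simps)
qed

text \<open>For x > 0: (px + 1 - p)(p/x + 1 - p) \<ge> 1, by x + 1/x \<ge> 2.\<close>
lemma bernoulli_mgf_product_ge_one:
  fixes p x :: real assumes "0 \<le> p" "p \<le> 1" "0 < x"
  shows "1 \<le> (p * x + 1 - p) * (p / x + 1 - p)"
proof -
  have "2 \<le> x + 1 / x"
    using assms(3) sum_squares_ge_zero[of "x - 1" 0] by (simp add: field_simps power2_eq_square)
  then have "p * (1 - p) * 2 \<le> p * (1 - p) * (x + 1 / x)" using assms by (intro mult_left_mono) auto
  moreover have "(p * x + 1 - p) * (p / x + 1 - p) = p\<^sup>2 + (1 - p)\<^sup>2 + p * (1 - p) * (x + 1 / x)"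
    using assms(3) by (simp add: field_simps power2_eq_square)
  ultimately show ?thesis by (simp add: power2_eq_square algebra_simps)
qed

lemma scaled_count_le:
  fixes p x :: real and n k :: nat
  assumes n: "n \<ge> 2" and p: "0 \<le> p" "p \<le> 1" and x: "1 \<le> x" and k: "k \<le> n - 1"
  defines "q \<equiv> p * x + 1 - p"
  shows "(1 + p * k) * q ^ k \<le> q ^ (n - 2) * (real n * p * x + 1 - p)"
proof -
  have q1: "1 \<le> q" and qx: "q \<le> x"
    using mult_left_mono[OF x, of p] mult_left_mono[OF x, of "1 - p"] p by (auto simp: q_def algebra_simps)
  have npx: "p * real n \<le> p * real n * x" using mult_left_mono[OF x, of "p * real n"] p by simp
  show ?thesis
  proof (cases "k \<le> n - 2")
    case True
    have "p * (1 + real k) \<le> p * real n" using True n p by (intro mult_left_mono) auto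
    then have "1 + p * k \<le> real n * p * x + 1 - p" using npx by (simp add: algebra_simps)
    moreover have "q ^ k \<le> q ^ (n - 2)" using q1 True by (intro power_increasing) auto
    ultimately show ?thesis using q1 p by (subst mult.commute, intro mult_mono) auto
  next
    case False
    then have kk: "k = Suc (n - 2)" using k n by simp
    have "(1 + p * k) * q = q + p * (real n - 1) * q" using kk n by (simp add: algebra_simps of_nat_diff)
    also have "\<dots> \<le> q + p * (real n - 1) * x" using qx p n by (intro add_left_mono mult_left_mono) auto
    also have "\<dots> = real n * p * x + 1 - p" by (simp add: q_def algebra_simps)
    finally have "((1 + p * k) * q) * q ^ (n - 2) \<le> (real n * p * x + 1 - p) * q ^ (n - 2)"
      using q1 by (intro mult_right_mono) auto
    then show ?thesis using kk by (simp add: algebra_simps)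
  qed
qed

text \<open>The key scalar inequality behind gamma_theta: for t \<ge> 0 and k \<le> n - 1,
  1 + pk \<le> q^(n-2) (npe^t + 1 - p) r^k, where q, r are the Bernoulli mgfs at t, -t.\<close>
lemma key_scalar:
  fixes p t :: real and n k :: nat
  assumes n: "n \<ge> 2" and p: "0 \<le> p" "p \<le> 1" and t: "0 \<le> t" and k: "k \<le> n - 1"
  shows "1 + p * k \<le> (p * exp t + 1 - p) ^ (n - 2) * (real n * p * exp t + 1 - p) * (p * exp (-t) + 1 - p) ^ k"
proof -
  let ?q = "p * exp t + 1 - p" and ?r = "p * exp (-t) + 1 - p"
  have "0 \<le> p * exp (-t)" using p by simp
  then have r0: "0 \<le> ?r" using p by linarith
  have "1 \<le> (?q * ?r) ^ k"
    using bernoulli_mgf_product_ge_one[OF p exp_gt_zero[of t]] by (simp add: exp_minus divide_inverse one_le_power)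
  then have "1 + p * k \<le> (1 + p * k) * (?q * ?r) ^ k"
    using p by (metis mult_left_mono mult.right_neutral of_nat_0_le_iff mult_nonneg_nonneg add_nonneg_nonneg zero_le_one)
  also have "\<dots> = ((1 + p * k) * ?q ^ k) * ?r ^ k" by (simp add: power_mult_distrib)
  also have "\<dots> \<le> ?q ^ (n - 2) * (real n * p * exp t + 1 - p) * ?r ^ k"
    using scaled_count_le[OF n p _ k, of "exp t"] t r0 by (intro mult_right_mono) auto
  finally show ?thesis .
qed

section \<open>Bounds on the moment generating function of the isolated vertex count\<close>

context
  fixes n :: nat and p :: real
  assumes n2: "n \<ge> 2" and p0: "0 < p" and p1: "p < 1"
begin

abbreviation Y :: "nat set set \<Rightarrow> real" where
  "Y G \<equiv> real (num_isolated n G)"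

lemma er_nonneg: "0 \<le> er_prob n p G"
  using p0 p1 by (simp add: er_prob_nonneg)

lemma gap_le_one_plus_degree:
  assumes "G \<subseteq> vpairs n"
  shows "Y (delete_incident G v) - Y G \<le> 1 + (\<Sum>e\<in>star_pairs n v. if e \<in> G then 1 else 0)"
proof -
  have "finite G" using assms vpairs_finite finite_subset by blast
  moreover have "{e \<in> G. v \<in> e} = star_pairs n v \<inter> G" using assms by (auto simp: star_pairs_def)
  ultimately have "card (leaf_nbrs n G v) \<le> card (star_pairs n v \<inter> G)"
    using card_leaf_nbrs_le_degree[of G n v] by simp
  moreover have "(\<Sum>e\<in>star_pairs n v. if e \<in> G then 1 else 0) = real (card (star_pairs n v \<inter> G))"
    using sum.inter_restrict[OF star_pairs_finite, of "\<lambda>_. 1 :: real" n v G] by simp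
  ultimately show ?thesis
    using of_nat_mono[OF num_isolated_delete_le[OF assms, of v], where 'a = real] by simp
qed

text \<open>First term: E[(Y(G^v) - Y(G)) e^{tY(G)}] \<le> (1 + (n-1)p) E e^{tY}, since the gain is at
  most 1 + deg v and each edge at v is negatively correlated with e^{tY}.\<close>
lemma gain_times_mgf_le:
  assumes t: "0 \<le> t" and v: "v \<in> {1..n}"
  shows "(\<Sum>G\<in>graphs n. er_prob n p G * ((Y (delete_incident G v) - Y G) * exp (t * Y G)))
         \<le> (1 + (real n - 1) * p) * mgf_Y n p t"
proof -
  define E where "E G = exp (t * Y G)" for G
  have "(\<Sum>G\<in>graphs n. er_prob n p G * ((Y (delete_incident G v) - Y G) * E G))
      \<le> (\<Sum>G\<in>graphs n. er_prob n p G * ((1 + (\<Sum>e\<in>star_pairs n v. if e \<in> G then 1 else 0)) * E G))"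
    using gap_le_one_plus_degree by (intro sum_mono mult_left_mono er_nonneg mult_right_mono)
      (auto simp: E_def graphs_def)
  also have "\<dots> = (\<Sum>G\<in>graphs n. er_prob n p G * E G)
        + (\<Sum>e\<in>star_pairs n v. \<Sum>G\<in>graphs n. er_prob n p G * (if e \<in> G then E G else 0))"
    by (simp add: algebra_simps sum.distrib sum_distrib_left sum_distrib_right
        sum.swap[of _ "star_pairs n v"] if_distrib cong: if_cong)
  also have "\<dots> \<le> (\<Sum>G\<in>graphs n. er_prob n p G * E G) + (\<Sum>e\<in>star_pairs n v. p * (\<Sum>G\<in>graphs n. er_prob n p G * E G))"
  proof (intro add_left_mono sum_mono)
    fix e assume "e \<in> star_pairs n v"
    then have "e \<in> vpairs n" by (simp add: star_pairs_def)
    then show "(\<Sum>G\<in>graphs n. er_prob n p G * (if e \<in> G then E G else 0)) \<le> p * (\<Sum>G\<in>graphs n. er_prob n p G * E G)"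
      unfolding graphs_def er_prob_bern_wt E_def using p0 p1 t
      by (intro sum_Pow_edge_antimono vpairs_finite exp_mono mult_left_mono) (auto intro: num_isolated_antimono)
  qed
  also have "\<dots> = (1 + (real n - 1) * p) * mgf_Y n p t"
    using card_star_pairs[OF v] n2 by (simp add: mgf_Y_def E_def algebra_simps of_nat_diff)
  finally show ?thesis by (simp add: E_def)
qed

definition star_to_iso :: "nat set set \<Rightarrow> nat \<Rightarrow> nat set set" where
  "star_to_iso H v = (\<lambda>u. {v, u}) ` (iso_set n H - {v})"

text \<open>Adding star edges S to a far part H destroys at most 1 + |S \<inter> star_to_iso H v|
  isolated vertices: v itself, and the leaf neighbours of v, which were isolated in H.\<close>
lemma isolated_loss_le:
  assumes H: "H \<subseteq> far_pairs n v" and S: "S \<subseteq> star_pairs n v"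
  shows "Y H - Y (H \<union> S) \<le> 1 + real (card (S \<inter> star_to_iso H v))"
proof -
  have "card (leaf_nbrs n (H \<union> S) v) \<le> card (S \<inter> star_to_iso H v)"
  proof (rule card_inj_on_le[OF leaf_nbrs_inj])
    show "finite (S \<inter> star_to_iso H v)" by (simp add: star_to_iso_def iso_set_finite)
    show "(\<lambda>u. {v, u}) ` leaf_nbrs n (H \<union> S) v \<subseteq> S \<inter> star_to_iso H v"
    proof
      fix e assume "e \<in> (\<lambda>u. {v, u}) ` leaf_nbrs n (H \<union> S) v"
      then obtain u where e: "e = {v, u}" and u: "u \<in> leaf_nbrs n (H \<union> S) v" by blast
      then have u1: "u \<in> {1..n}" "u \<noteq> v" "{v, u} \<in> H \<union> S"
        and only: "\<forall>e\<in>H \<union> S. u \<in> e \<longrightarrow> e = {v, u}"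
        unfolding leaf_nbrs_def by blast+
      have "{v, u} \<notin> H" using H by (auto simp: far_pairs_def)
      then have "{v, u} \<in> S" using u1 by blast
      moreover have "u \<in> iso_set n H"
        unfolding iso_set_def using u1 only H by (auto simp: far_pairs_def)
      ultimately show "e \<in> S \<inter> star_to_iso H v" using e u1 unfolding star_to_iso_def by blast
    qed
  qed
  then show ?thesis
    using of_nat_mono[OF num_isolated_delete_le[OF split_subset_vpairs[OF H S], of v], where 'a = real]
    by (simp add: delete_incident_split[OF H S])
qed

lemma star_to_iso_props:
  assumes H: "H \<subseteq> far_pairs n v" and v: "v \<in> {1..n}"
  shows "star_to_iso H v \<subseteq> star_pairs n v"
    and "Y H = real (card (star_to_iso H v)) + 1"
proof -
  show "star_to_iso H v \<subseteq> star_pairs n v"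
    using v by (auto simp: star_to_iso_def star_pairs_def iso_set_def intro: pair_in_vpairs)
  have vH: "v \<in> iso_set n H" using H v by (auto simp: iso_set_def far_pairs_def)
  have "card (star_to_iso H v) = card (iso_set n H - {v})"
    unfolding star_to_iso_def by (rule card_image) (auto simp: inj_on_def doubleton_eq_iff)
  then show "Y H = real (card (star_to_iso H v)) + 1"
    using vH iso_set_finite card_Suc_Diff1 by (metis num_isolated_card of_nat_Suc add.commute)
qed

text \<open>Conditional form of the second term, given the far part H = G^v: with k + 1 = Y(H)
  isolated vertices, E_S[(Y(H) - Y(H \<union> S)) e^{tY(H)}] \<le> e^{t(k+1)} (1 + pk), and
  key_scalar trades 1 + pk for r^k = E_S e^{-t|S \<inter> M|} \<le> e^{-tk} E_S e^{tY(H \<union> S)}.\<close>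
lemma conditional_loss_bound:
  assumes t: "0 \<le> t" and v: "v \<in> {1..n}" and H: "H \<subseteq> far_pairs n v"
  defines "B \<equiv> star_pairs n v"
    and "C \<equiv> (p * exp t + 1 - p) ^ (n - 2) * (real n * p * exp t + 1 - p)"
  shows "(\<Sum>S\<in>Pow B. bern_wt p B S * ((Y H - Y (H \<union> S)) * exp (t * Y H)))
      \<le> exp t * C * (\<Sum>S\<in>Pow B. bern_wt p B S * exp (t * Y (H \<union> S)))"
proof -
  define M where "M = star_to_iso H v"
  define k where "k = card M"
  have BM: "B \<inter> M = M" and YH: "Y H = real k + 1"
    using star_to_iso_props[OF H v] by (auto simp: B_def M_def k_def)
  have kn: "k \<le> n - 1"
    using card_mono[OF _ iso_set_sub, of n H] YH by (simp add: num_isolated_card)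
  have fB: "finite B" by (simp add: B_def star_pairs_finite)
  have w0: "0 \<le> bern_wt p B S" for S using p0 p1 by (intro bern_wt_nonneg) auto
  have loss: "Y H - Y (H \<union> S) \<le> 1 + real (card (S \<inter> M))" if "S \<in> Pow B" for S
    using isolated_loss_le[OF H, of S] that by (simp add: B_def M_def)
  have "0 \<le> p * exp t" "0 \<le> real n * p * exp t" using p0 by simp_all
  then have "0 \<le> p * exp t + 1 - p" "0 \<le> real n * p * exp t + 1 - p" using p1 by linarith+
  then have C0: "0 \<le> exp t * C" by (simp add: C_def)
  have "(\<Sum>S\<in>Pow B. bern_wt p B S * ((Y H - Y (H \<union> S)) * exp (t * Y H)))
      \<le> exp (t * Y H) * (\<Sum>S\<in>Pow B. bern_wt p B S * (1 + real (card (S \<inter> M))))"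
    unfolding sum_distrib_left
  proof (rule sum_mono)
    fix S assume S: "S \<in> Pow B"
    have "(Y H - Y (H \<union> S)) * exp (t * Y H) \<le> (1 + real (card (S \<inter> M))) * exp (t * Y H)"
      using loss[OF S] by (intro mult_right_mono) auto
    from mult_left_mono[OF this w0]
    show "bern_wt p B S * ((Y H - Y (H \<union> S)) * exp (t * Y H))
        \<le> exp (t * Y H) * (bern_wt p B S * (1 + real (card (S \<inter> M))))"
      by (simp add: mult.commute mult.left_commute)
  qed
  also have "\<dots> = exp t * (exp (t * real k) * (1 + p * k))"
    using sum_Pow_total[OF fB] sum_Pow_card_inter[OF fB, of p M]
    by (simp add: sum.distrib distrib_left BM YH k_def exp_add algebra_simps)
  also have "\<dots> \<le> exp t * (exp (t * real k) * (C * (p * exp (-t) + 1 - p) ^ k))"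
    using key_scalar[OF n2 _ _ t kn, of p] p0 p1 by (intro mult_left_mono) (auto simp: C_def)
  also have "\<dots> = exp t * C * (exp (t * real k) * (\<Sum>S\<in>Pow B. bern_wt p B S * exp (-t) ^ card (S \<inter> M)))"
    using sum_Pow_power_card_inter[OF fB, of p "exp (-t)" M] BM by (simp add: k_def ac_simps)
  also have "\<dots> \<le> exp t * C * (\<Sum>S\<in>Pow B. bern_wt p B S * exp (t * Y (H \<union> S)))"
  proof (rule mult_left_mono[OF _ C0])
    have "exp (t * real k) * (bern_wt p B S * exp (-t) ^ card (S \<inter> M)) \<le> bern_wt p B S * exp (t * Y (H \<union> S))"
      if S: "S \<in> Pow B" for S
    proof -
      have "t * (real k - real (card (S \<inter> M))) \<le> t * Y (H \<union> S)"
        using loss[OF S] YH t by (intro mult_left_mono) auto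
      then have "exp (t * real k) * exp (-t) ^ card (S \<inter> M) \<le> exp (t * Y (H \<union> S))"
        by (simp add: exp_of_nat_mult[symmetric] exp_add[symmetric] algebra_simps)
      from mult_left_mono[OF this w0] show ?thesis by (simp add: ac_simps)
    qed
    then show "exp (t * real k) * (\<Sum>S\<in>Pow B. bern_wt p B S * exp (-t) ^ card (S \<inter> M))
        \<le> (\<Sum>S\<in>Pow B. bern_wt p B S * exp (t * Y (H \<union> S)))"
      unfolding sum_distrib_left by (rule sum_mono)
  qed
  finally show ?thesis .
qed

text \<open>Second term: E[(Y(G^v) - Y(G)) e^{tY(G^v)}] \<le> e^t C E e^{tY}, obtained by averaging
  the conditional bound over the far part H = G^v.\<close>
lemma gain_times_mgf_deleted_le:
  assumes t: "0 \<le> t" and v: "v \<in> {1..n}"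
  shows "(\<Sum>G\<in>graphs n. er_prob n p G * ((Y (delete_incident G v) - Y G) * exp (t * Y (delete_incident G v))))
         \<le> exp t * ((p * exp t + 1 - p) ^ (n - 2) * (real n * p * exp t + 1 - p)) * mgf_Y n p t"
proof -
  let ?A = "far_pairs n v" and ?B = "star_pairs n v"
  let ?C = "(p * exp t + 1 - p) ^ (n - 2) * (real n * p * exp t + 1 - p)"
  have "(\<Sum>G\<in>graphs n. er_prob n p G * ((Y (delete_incident G v) - Y G) * exp (t * Y (delete_incident G v))))
     = (\<Sum>H\<in>Pow ?A. bern_wt p ?A H * (\<Sum>S\<in>Pow ?B. bern_wt p ?B S * ((Y H - Y (H \<union> S)) * exp (t * Y H))))"
    unfolding er_sum_split[of n p _ v]
    by (intro sum.cong refl arg_cong2[where f = "(*)"]) (auto simp: delete_incident_split)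
  also have "\<dots> \<le> (\<Sum>H\<in>Pow ?A. bern_wt p ?A H * (exp t * ?C * (\<Sum>S\<in>Pow ?B. bern_wt p ?B S * exp (t * Y (H \<union> S)))))"
  proof (rule sum_mono)
    fix H assume "H \<in> Pow ?A"
    then show "bern_wt p ?A H * (\<Sum>S\<in>Pow ?B. bern_wt p ?B S * ((Y H - Y (H \<union> S)) * exp (t * Y H)))
        \<le> bern_wt p ?A H * (exp t * ?C * (\<Sum>S\<in>Pow ?B. bern_wt p ?B S * exp (t * Y (H \<union> S))))"
      using p0 p1 by (intro mult_left_mono conditional_loss_bound[OF t v] bern_wt_nonneg) auto
  qed
  also have "\<dots> = exp t * ?C * (\<Sum>H\<in>Pow ?A. bern_wt p ?A H * (\<Sum>S\<in>Pow ?B. bern_wt p ?B S * exp (t * Y (H \<union> S))))"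
    by (simp only: sum_distrib_left[where r = "exp t * ?C" and A = "Pow ?A"] mult.left_commute)
  also have "\<dots> = exp t * ?C * mgf_Y n p t"
    by (simp only: mgf_Y_def er_sum_split[of n p _ v])
  finally show ?thesis .
qed

text \<open>The bound for \<theta> \<ge> 0: apply the trapezoid bound to e^{tY(G^v)} - e^{tY(G)} and
  add the two terms; their constants sum to gamma_theta.\<close>
lemma mgf_gap_nonneg_theta:
  assumes t: "0 \<le> t"
  shows "mgf_Ys n p t - mgf_Y n p t \<le> t * gamma_theta n p t / 2 * mgf_Y n p t"
proof -
  have per_vertex: "(\<Sum>G\<in>graphs n. er_prob n p G * (exp (t * Y (delete_incident G v)) - exp (t * Y G)))
      \<le> t * gamma_theta n p t / 2 * mgf_Y n p t" if v: "v \<in> {1..n}" for v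
  proof -
    let ?d = "\<lambda>G. Y (delete_incident G v) - Y G"
    have "(\<Sum>G\<in>graphs n. er_prob n p G * (exp (t * Y (delete_incident G v)) - exp (t * Y G)))
        \<le> (\<Sum>G\<in>graphs n. er_prob n p G * (t / 2 * (?d G * exp (t * Y G) + ?d G * exp (t * Y (delete_incident G v)))))"
    proof (intro sum_mono mult_left_mono er_nonneg)
      fix G assume "G \<in> graphs n"
      then have "t * Y G \<le> t * Y (delete_incident G v)"
        using num_isolated_delete_ge t by (intro mult_left_mono) (auto simp: graphs_def)
      from exp_trapezoid[OF this]
      show "exp (t * Y (delete_incident G v)) - exp (t * Y G)
          \<le> t / 2 * (?d G * exp (t * Y G) + ?d G * exp (t * Y (delete_incident G v)))"
        by (simp add: algebra_simps)
    qed
    also have "\<dots> = t / 2 * ((\<Sum>G\<in>graphs n. er_prob n p G * (?d G * exp (t * Y G)))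
        + (\<Sum>G\<in>graphs n. er_prob n p G * (?d G * exp (t * Y (delete_incident G v)))))"
      unfolding sum.distrib[symmetric] sum_distrib_left by (rule sum.cong) (simp_all add: algebra_simps)
    also have "\<dots> \<le> t / 2 * ((1 + (real n - 1) * p) * mgf_Y n p t
        + exp t * ((p * exp t + 1 - p) ^ (n - 2) * (real n * p * exp t + 1 - p)) * mgf_Y n p t)"
      using gain_times_mgf_le[OF t v] gain_times_mgf_deleted_le[OF t v] t
      by (intro mult_left_mono add_mono) auto
    also have "\<dots> = t * gamma_theta n p t / 2 * mgf_Y n p t"
      by (simp add: gamma_theta_def algebra_simps)
    finally show ?thesis .
  qed
  have n1: "1 \<le> n" using n2 by simp
  have "mgf_Ys n p t - mgf_Y n p t
      \<le> (1 / real n) * (\<Sum>v\<in>{1..n}. t * gamma_theta n p t / 2 * mgf_Y n p t)"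
    unfolding mgf_Ys_minus_mgf_Y[OF n1] by (rule mult_left_mono[OF sum_mono[OF per_vertex]]) simp_all
  also have "\<dots> = t * gamma_theta n p t / 2 * mgf_Y n p t" using n1 by simp
  finally show ?thesis .
qed

text \<open>The bound for \<theta> < 0: the tangent bound gives
  e^{tY} - e^{tY(G^v)} \<le> |t| e^{tY} (Y(G^v) - Y(G)), and the gains sum to at most 2n.\<close>
lemma mgf_gap_neg_theta:
  assumes t: "t < 0"
  shows "mgf_Y n p t - mgf_Ys n p t \<le> 2 * \<bar>t\<bar> * mgf_Y n p t"
proof -
  have per_graph: "(\<Sum>v\<in>{1..n}. exp (t * Y G) - exp (t * Y (delete_incident G v)))
      \<le> 2 * real n * (- t * exp (t * Y G))" if G: "G \<in> graphs n" for G
  proof -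
    have "(\<Sum>v\<in>{1..n}. exp (t * Y G) - exp (t * Y (delete_incident G v)))
        \<le> (\<Sum>v\<in>{1..n}. (Y (delete_incident G v) - Y G) * (- t * exp (t * Y G)))"
    proof (rule sum_mono)
      fix v
      show "exp (t * Y G) - exp (t * Y (delete_incident G v)) \<le> (Y (delete_incident G v) - Y G) * (- t * exp (t * Y G))"
        using exp_diff_le_tangent[of "t * Y G" "t * Y (delete_incident G v)"] by (simp add: algebra_simps)
    qed
    also have "\<dots> \<le> 2 * real n * (- t * exp (t * Y G))"
      unfolding sum_distrib_right[symmetric] using sum_isolated_gain_le[of G n] G t
      by (intro mult_right_mono) (auto simp: graphs_def mult_nonpos_nonneg)
    finally show ?thesis .
  qed
  have n1: "1 \<le> n" using n2 by simp
  have "mgf_Y n p t - mgf_Ys n p t = - (mgf_Ys n p t - mgf_Y n p t)" by simp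
  also have "\<dots> = (1 / real n) * (\<Sum>v\<in>{1..n}. \<Sum>G\<in>graphs n. er_prob n p G *
          (exp (t * Y G) - exp (t * Y (delete_incident G v))))"
    unfolding mgf_Ys_minus_mgf_Y[OF n1]
    by (simp add: sum_subtractf right_diff_distrib)
  also have "\<dots> = (1 / real n) * (\<Sum>G\<in>graphs n. er_prob n p G *
          (\<Sum>v\<in>{1..n}. exp (t * Y G) - exp (t * Y (delete_incident G v))))"
    by (subst sum.swap) (simp only: sum_distrib_left)
  also have "\<dots> \<le> (1 / real n) * (\<Sum>G\<in>graphs n. er_prob n p G * (2 * real n * (- t * exp (t * Y G))))"
    using per_graph by (intro mult_left_mono sum_mono er_nonneg) auto
  also have "\<dots> = 2 * \<bar>t\<bar> * mgf_Y n p t"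
    using n2 t by (simp add: mgf_Y_def sum_distrib_left algebra_simps)
  finally show ?thesis .
qed

end

theorem mainTheorem6:
  fixes n :: nat and p :: real
  assumes "n \<ge> 2" and "0 < p" and "p < 1"
  shows "(\<forall>\<theta>::real. \<theta> \<ge> 0 \<longrightarrow>
            mgf_Ys n p \<theta> - mgf_Y n p \<theta> \<le> \<theta> * gamma_theta n p \<theta> / 2 * mgf_Y n p \<theta>
          \<and> deriv (mgf_Y n p) \<theta> \<le> mean_Y n p * (1 + \<theta> * gamma_theta n p \<theta> / 2) * mgf_Y n p \<theta>)
       \<and> (\<forall>\<theta>::real. \<theta> < 0 \<longrightarrow>
            mgf_Y n p \<theta> - mgf_Ys n p \<theta> \<le> 2 * \<bar>\<theta>\<bar> * mgf_Y n p \<theta>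
          \<and> deriv (mgf_Y n p) \<theta> \<ge> mean_Y n p * (1 + 2 * \<theta>) * mgf_Y n p \<theta>)"
proof -
  have mean: "0 \<le> mean_Y n p" using assms by (simp add: mean_Y_eq)
  show ?thesis
  proof (intro conjI allI impI)
    fix t :: real assume t: "0 \<le> t"
    show gap: "mgf_Ys n p t - mgf_Y n p t \<le> t * gamma_theta n p t / 2 * mgf_Y n p t"
      by (rule mgf_gap_nonneg_theta[OF assms t])
    show "deriv (mgf_Y n p) t \<le> mean_Y n p * (1 + t * gamma_theta n p t / 2) * mgf_Y n p t"
      unfolding deriv_mgf_Y using mult_left_mono[OF gap mean] by (simp add: algebra_simps)
  next
    fix t :: real assume t: "t < 0"
    show gap: "mgf_Y n p t - mgf_Ys n p t \<le> 2 * \<bar>t\<bar> * mgf_Y n p t"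
      by (rule mgf_gap_neg_theta[OF assms t])
    show "mean_Y n p * (1 + 2 * t) * mgf_Y n p t \<le> deriv (mgf_Y n p) t"
      unfolding deriv_mgf_Y using mult_left_mono[OF gap mean] t by (simp add: algebra_simps)
  qed
qed

end
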